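(* In the setting of the context, fix $\beta>0$ and let $N\ge1$ be an integer such that $\|k-g\|<\beta\|k\|$, where $g:=\sum_{n=1}^Nk_n\phi_n$, $\phi_n(x)=\sqrt2\sin(n\pi x)$, $k_n:=\int_0^1k(y)\phi_n(y)dy$ (such $N$ exists). Let $\lambda_n:=n^2\pi^2\theta-\lambda$, $F_N:=\sum_{n=1}^N|k_n\phi_n'(1)|$, $G_N:=\sum_{n=1}^N|k_n\lambda_n|$, $p:=-2\theta\pi^2+2\lambda+\tfrac13\lambda^2$, and $$a_0:=\beta\|k\|-\|k-g\|,\quad a_1:=\theta\|k\|F_N+\tfrac{\sqrt3}{3}G_N\|k\|,\quad a_2:=G_N\Big(1+\tfrac{\sqrt3}{3}\|k\|+\tfrac{\|k\|}{\sqrt p}\Big).$$ Then for every $u_0\in L^2(0,1)$ and every $j\ge0$ with $t_{j+1}<\infty$, $$t_{j+1}-t_j\ge\tau:=\frac2p\,W\!\Big(\frac{p\,a_0}{2(a_1+a_2)}\Big)>0,$$ where $W$ is the principal branch of the Lambert W function (the inverse of $s\mapsto se^s$ on $[0,\infty)$).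
   Context: Standing setting. Fix $\theta>0$, $\lambda\in\mathbb{R}$ with $\lambda\ge\theta\pi^2$, and a design parameter $c\ge0$; set $\kappa:=(\lambda+c)/\theta>0$. Define the kernel on $\{0\le y\le x\le1\}$ by $K(x,y)=-y\kappa\,\frac{I_1(\sqrt{\kappa(x^2-y^2)})}{\sqrt{\kappa(x^2-y^2)}}$ (extended continuously to $y=x$ by the value $-y\kappa/2$), where $I_1$ is the modified Bessel function of the first kind of order 1, and let $k(y):=K(1,y)$, $y\in[0,1]$. $\|\cdot\|$ is the $L^2(0,1)$ norm and $u[t]$ denotes $x\mapsto u(t,x)$. The closed-loop system is $u_t=\theta u_{xx}+\lambda u$ on $(0,1)$, $u(t,0)=0$, $u(t,1)=U_d(t)$, $u[0]=u_0\in L^2(0,1)$, under the event-triggered boundary control with parameter $\beta>0$ defined as follows. Set $t_0=0$. Given an event time $t_j$ and $u[t_j]$, let $u$ on $[t_j,\infty)$ be the (unique) solution with held boundary value $U_d(t)=\int_0^1k(y)u(t_j,y)\,dy$, where solution means: $t\mapsto u[t]$ continuous into $L^2(0,1)$ on $[t_j,\infty)$, $u\in C^1$ on $(t_j,\infty)\times[0,1]$, $u[t]\in C^2([0,1])$ for $t>t_j$, PDE and boundary conditions holding pointwise. Let $d(t):=\int_0^1k(y)\big(u(t_j,y)-u(t,y)\big)dy$ and $S_j:=\{t>t_j:\ |d(t)|>\beta\|k\|\,\|u[t]\|+\beta\|k\|\,\|u[t_j]\|\}$. If $S_j=\emptyset$ there are no further events ($t_{j+1}:=+\infty$); otherwise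 $t_{j+1}:=\inf S_j$, the control is $U_d(t)=\int_0^1k(y)u(t_j,y)dy$ for $t\in[t_j,t_{j+1})$, and the construction is repeated from $t_{j+1}$. *)

theory Defs
  imports "HOL-Analysis.Analysis"
begin

definition besselI1 :: "real \<Rightarrow> real" where
  "besselI1 z = (\<Sum>m. (z / 2) ^ (2 * m + 1) / (fact m * fact (m + 1)))"

text \<open>Backstepping kernel K(x,y) with parameter kappa, continuously extended at y = x.\<close>
definition kernelK :: "real \<Rightarrow> real \<Rightarrow> real \<Rightarrow> real" where
  "kernelK kappa x y =
     (if y = x then - y * kappa / 2
      else - y * kappa * besselI1 (sqrt (kappa * (x\<^sup>2 - y\<^sup>2))) / sqrt (kappa * (x\<^sup>2 - y\<^sup>2)))"

definition gain_k :: "real \<Rightarrow> real \<Rightarrow> real \<Rightarrow> real \<Rightarrow> real" where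
  "gain_k theta lam c y = kernelK ((lam + c) / theta) 1 y"

definition L2 :: "(real \<Rightarrow> real) \<Rightarrow> bool" where
  "L2 f \<longleftrightarrow> f \<in> borel_measurable (lebesgue_on {0..1})
           \<and> integrable (lebesgue_on {0..1}) (\<lambda>x. (f x)\<^sup>2)"

definition L2norm :: "(real \<Rightarrow> real) \<Rightarrow> real" where
  "L2norm f = sqrt (integral\<^sup>L (lebesgue_on {0..1}) (\<lambda>x. (f x)\<^sup>2))"

definition ip01 :: "(real \<Rightarrow> real) \<Rightarrow> (real \<Rightarrow> real) \<Rightarrow> real" where
  "ip01 f g = integral\<^sup>L (lebesgue_on {0..1}) (\<lambda>x. f x * g x)"

definition heat_solution ::
  "real \<Rightarrow> real \<Rightarrow> real \<Rightarrow> real \<Rightarrow> (real \<Rightarrow> real \<Rightarrow> real) \<Rightarrow> bool" where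
  "heat_solution theta lam t0 U w \<longleftrightarrow>
     (\<forall>t\<ge>t0. L2 (w t)) \<and>
     (\<forall>s\<ge>t0. ((\<lambda>t. L2norm (\<lambda>x. w t x - w s x)) \<longlongrightarrow> 0) (at s within {t0..})) \<and>
     (\<exists>wt wx wxx :: real \<Rightarrow> real \<Rightarrow> real.
        continuous_on ({t0<..} \<times> {0..1}) (\<lambda>(t, x). wt t x) \<and>
        continuous_on ({t0<..} \<times> {0..1}) (\<lambda>(t, x). wx t x) \<and>
        (\<forall>t>t0. \<forall>x\<in>{0..1}. ((\<lambda>s. w s x) has_real_derivative wt t x) (at t)) \<and>
        (\<forall>t>t0. \<forall>x\<in>{0..1}. ((\<lambda>y. w t y) has_real_derivative wx t x) (at x within {0..1})) \<and>
        (\<forall>t>t0. \<forall>x\<in>{0..1}. ((\<lambda>y. wx t y) has_real_derivative wxx t x) (at x within {0..1})) \<and>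
        (\<forall>t>t0. continuous_on {0..1} (wxx t)) \<and>
        (\<forall>t>t0. \<forall>x\<in>{0<..<1}. wt t x = theta * wxx t x + lam * w t x) \<and>
        (\<forall>t>t0. w t 0 = 0 \<and> w t 1 = U))"

text \<open>Event times ts j :: ereal
  (\<infinity> means no further event). On [t_j, t_{j+1}] the closed-loop state u coincides (on [0,1])
  with the held solution w started from u[t_j] with U = <k, u[t_j]>; t_{j+1} = inf S_j.\<close>
definition event_triggered ::
  "real \<Rightarrow> real \<Rightarrow> real \<Rightarrow> real \<Rightarrow> (real \<Rightarrow> real) \<Rightarrow> (real \<Rightarrow> real \<Rightarrow> real) \<Rightarrow> (nat \<Rightarrow> ereal) \<Rightarrow> bool"
  where
  "event_triggered theta lam c beta u0 u ts \<longleftrightarrow>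
     (\<forall>x\<in>{0..1}. u 0 x = u0 x) \<and> ts 0 = 0 \<and>
     (\<forall>j. ts j = \<infinity> \<longrightarrow> ts (Suc j) = \<infinity>) \<and>
     (\<forall>j. ts j \<noteq> \<infinity> \<longrightarrow>
        (\<exists>w. heat_solution theta lam (real_of_ereal (ts j))
                 (ip01 (gain_k theta lam c) (u (real_of_ereal (ts j)))) w \<and>
             (\<forall>x\<in>{0..1}. w (real_of_ereal (ts j)) x = u (real_of_ereal (ts j)) x) \<and>
             (let tj = real_of_ereal (ts j); k = gain_k theta lam c;
                  S = {t. tj < t \<and>
                        \<bar>ip01 k (\<lambda>y. w tj y - w t y)\<bar>
                          > beta * L2norm k * L2norm (w t) + beta * L2norm k * L2norm (w tj)}
              in (S = {} \<longrightarrow> ts (Suc j) = \<infinity>) \<and> (S \<noteq> {} \<longrightarrow> ts (Suc j) = ereal (Inf S))) \<and>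
             (\<forall>t. ts j \<le> ereal t \<and> ereal t \<le> ts (Suc j) \<longrightarrow> (\<forall>x\<in>{0..1}. u t x = w t x))))"

definition lambertW :: "real \<Rightarrow> real" where
  "lambertW x = (THE s. 0 \<le> s \<and> s * exp s = x)"

definition phi :: "nat \<Rightarrow> real \<Rightarrow> real" where
  "phi n x = sqrt 2 * sin (real n * pi * x)"

end

theory Submission
  imports Defs
begin

text \<open>Between two events the boundary value is frozen at \<open>U = \<langle>k, u(t\<^sub>j)\<rangle>\<close>, so by Green's
  formula each Fourier coefficient \<open>c\<^sub>n(t) = \<langle>\<phi>\<^sub>n, u(t)\<rangle>\<close> solves the scalar linear equation
  \<open>c\<^sub>n' = - \<lambda>\<^sub>n c\<^sub>n - \<theta> \<phi>\<^sub>n'(1) U\<close>. Its explicit solution, \<open>|U| \<le> \<parallel>k\<parallel> \<parallel>u(t\<^sub>j)\<parallel>\<close> and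
  \<open>- \<lambda>\<^sub>n \<le> p / 2\<close> give, with \<open>s = t - t\<^sub>j\<close>,
  \<open>|c\<^sub>n(t) - c\<^sub>n(t\<^sub>j)| \<le> (|\<lambda>\<^sub>n| + \<theta> |\<phi>\<^sub>n'(1)| \<parallel>k\<parallel>) \<parallel>u(t\<^sub>j)\<parallel> s exp (p s / 2)\<close>.
  Splitting \<open>k = g + (k - g)\<close> and applying Cauchy-Schwarz to the remainder bounds the
  triggering quantity by \<open>\<parallel>k - g\<parallel> (\<parallel>u(t\<^sub>j)\<parallel> + \<parallel>u(t)\<parallel>) + (G\<^sub>N + \<theta> \<parallel>k\<parallel> F\<^sub>N) \<parallel>u(t\<^sub>j)\<parallel> s exp (p s / 2)\<close>.
  At an event it exceeds \<open>\<beta> \<parallel>k\<parallel> (\<parallel>u(t)\<parallel> + \<parallel>u(t\<^sub>j)\<parallel>)\<close>, which forces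
  \<open>a\<^sub>0 < (a\<^sub>1 + a\<^sub>2) s exp (p s / 2)\<close> (only \<open>G\<^sub>N + \<theta> \<parallel>k\<parallel> F\<^sub>N \<le> a\<^sub>1 + a\<^sub>2\<close> is used), and
  inverting the increasing map \<open>s \<mapsto> s exp (p s / 2)\<close> by Lambert W yields \<open>s > \<tau>\<close>.\<close>

section \<open>The space \<open>L\<^sup>2(0,1)\<close>\<close>

lemma L2_mult_integrable:
  assumes "L2 f" "L2 g"
  shows "integrable (lebesgue_on {0..1}) (\<lambda>x. f x * g x)"
proof (rule Bochner_Integration.integrable_bound)
  show "integrable (lebesgue_on {0..1}) (\<lambda>x. (f x)\<^sup>2 + (g x)\<^sup>2)"
    using assms unfolding L2_def by auto
  show "(\<lambda>x. f x * g x) \<in> borel_measurable (lebesgue_on {0..1})"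
    using assms unfolding L2_def by auto
  have "\<bar>f x * g x\<bar> \<le> (f x)\<^sup>2 + (g x)\<^sup>2" for x
  proof -
    have "2 * (\<bar>f x\<bar> * \<bar>g x\<bar>) \<le> (f x)\<^sup>2 + (g x)\<^sup>2"
      using sum_squares_bound[of "\<bar>f x\<bar>" "\<bar>g x\<bar>"] by (simp add: mult.assoc)
    moreover have "0 \<le> \<bar>f x\<bar> * \<bar>g x\<bar>" by simp
    ultimately have "\<bar>f x\<bar> * \<bar>g x\<bar> \<le> (f x)\<^sup>2 + (g x)\<^sup>2" by linarith
    then show ?thesis by (simp add: abs_mult)
  qed
  then show "AE x in lebesgue_on {0..1}. norm (f x * g x) \<le> norm ((f x)\<^sup>2 + (g x)\<^sup>2)"
    by simp
qed

lemma L2_diff: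
  assumes "L2 f" "L2 g"
  shows "L2 (\<lambda>x. f x - g x)"
  unfolding L2_def
proof
  show "(\<lambda>x. f x - g x) \<in> borel_measurable (lebesgue_on {0..1})"
    using assms unfolding L2_def by auto
  have "(\<lambda>x. (f x - g x)\<^sup>2) = (\<lambda>x. (f x)\<^sup>2 - 2 * (f x * g x) + (g x)\<^sup>2)"
    by (simp add: power2_diff algebra_simps)
  then show "integrable (lebesgue_on {0..1}) (\<lambda>x. (f x - g x)\<^sup>2)"
    using assms L2_mult_integrable[OF assms] unfolding L2_def by auto
qed

lemma L2_continuous_on:
  assumes "continuous_on {0..1} f"
  shows "L2 f"
  unfolding L2_def
proof
  show "f \<in> borel_measurable (lebesgue_on {0..1})"
    by (rule continuous_imp_measurable_on_sets_lebesgue[OF assms]) auto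
  show "integrable (lebesgue_on {0..1}) (\<lambda>x. (f x)\<^sup>2)"
    by (rule continuous_imp_integrable_real) (intro continuous_intros assms)
qed

lemma L2norm_nonneg: "L2norm f \<ge> 0"
  unfolding L2norm_def by simp

lemma quadratic_nonneg_imp_discriminant_le:
  fixes A B C :: real
  assumes "\<And>t. 0 \<le> A + 2 * t * B + t\<^sup>2 * C" "C \<ge> 0"
  shows "B\<^sup>2 \<le> A * C"
proof (cases "C = 0")
  case True
  have "B = 0"
  proof (rule ccontr)
    assume "B \<noteq> 0"
    have "0 \<le> A + 2 * (- (A + 1) / (2 * B)) * B + (- (A + 1) / (2 * B))\<^sup>2 * C"
      by (rule assms(1))
    with True \<open>B \<noteq> 0\<close> show False by (simp add: field_simps)
  qed
  with True show ?thesis by simp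
next
  case False
  with assms(2) have C: "C > 0" by simp
  have "0 \<le> A + 2 * (- B / C) * B + (- B / C)\<^sup>2 * C"
    by (rule assms(1))
  then have "0 \<le> (A + 2 * (- B / C) * B + (- B / C)\<^sup>2 * C) * C"
    using C by simp
  also have "\<dots> = A * C - B\<^sup>2"
    using C by (simp add: field_simps power2_eq_square)
  finally show ?thesis by simp
qed

lemma ip01_Cauchy_Schwarz:
  assumes f: "L2 f" and g: "L2 g"
  shows "\<bar>ip01 f g\<bar> \<le> L2norm f * L2norm g"
proof -
  define A where "A = integral\<^sup>L (lebesgue_on {0..1}) (\<lambda>x. (f x)\<^sup>2)"
  define B where "B = ip01 f g"
  define C where "C = integral\<^sup>L (lebesgue_on {0..1}) (\<lambda>x. (g x)\<^sup>2)"
  have iA: "integrable (lebesgue_on {0..1}) (\<lambda>x. (f x)\<^sup>2)"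
    and iC: "integrable (lebesgue_on {0..1}) (\<lambda>x. (g x)\<^sup>2)"
    using f g unfolding L2_def by auto
  have "0 \<le> A + 2 * t * B + t\<^sup>2 * C" for t
  proof -
    have "0 \<le> integral\<^sup>L (lebesgue_on {0..1}) (\<lambda>x. (f x + t * g x)\<^sup>2)" by simp
    also have "(\<lambda>x. (f x + t * g x)\<^sup>2) = (\<lambda>x. (f x)\<^sup>2 + (2 * t) * (f x * g x) + t\<^sup>2 * (g x)\<^sup>2)"
      by (auto simp: power2_eq_square algebra_simps)
    also have "integral\<^sup>L (lebesgue_on {0..1}) \<dots> = A + 2 * t * B + t\<^sup>2 * C"
      using iA iC L2_mult_integrable[OF f g] unfolding A_def B_def C_def ip01_def by simp
    finally show ?thesis .
  qed
  moreover have "C \<ge> 0" unfolding C_def by simp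
  ultimately have "B\<^sup>2 \<le> A * C" by (rule quadratic_nonneg_imp_discriminant_le)
  then have "\<bar>B\<bar> \<le> sqrt (A * C)" by (metis real_sqrt_abs real_sqrt_le_mono)
  then show ?thesis unfolding L2norm_def A_def B_def C_def by (simp add: real_sqrt_mult)
qed

lemma ip01_continuous_on_eq_integral:
  assumes "continuous_on {0..1} f" "continuous_on {0..1} g"
  shows "ip01 f g = integral {0..1} (\<lambda>x. f x * g x)"
  unfolding ip01_def
  by (rule lebesgue_integral_eq_integral)
    (auto intro!: continuous_imp_integrable_real continuous_intros assms)

lemma ip01_cong:
  assumes "\<And>x. x \<in> {0..1} \<Longrightarrow> f x = f' x" "\<And>x. x \<in> {0..1} \<Longrightarrow> g x = g' x"
  shows "ip01 f g = ip01 f' g'"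
  unfolding ip01_def by (rule Bochner_Integration.integral_cong) (auto simp: assms)

lemma ip01_diff_right:
  assumes "L2 f" "L2 g" "L2 h"
  shows "ip01 f (\<lambda>x. g x - h x) = ip01 f g - ip01 f h"
  using assms unfolding ip01_def
  by (simp add: right_diff_distrib L2_mult_integrable)

lemma ip01_diff_left:
  assumes "L2 f" "L2 g" "L2 h"
  shows "ip01 (\<lambda>x. f x - g x) h = ip01 f h - ip01 g h"
  using assms unfolding ip01_def
  by (simp add: left_diff_distrib L2_mult_integrable)

lemma ip01_sum_left:
  assumes "\<And>n. n \<in> A \<Longrightarrow> L2 (f n)" "L2 h"
  shows "ip01 (\<lambda>y. \<Sum>n\<in>A. a n * f n y) h = (\<Sum>n\<in>A. a n * ip01 (f n) h)"
proof -
  have "ip01 (\<lambda>y. \<Sum>n\<in>A. a n * f n y) h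
      = integral\<^sup>L (lebesgue_on {0..1}) (\<lambda>x. \<Sum>n\<in>A. a n * (f n x * h x))"
    unfolding ip01_def by (simp add: sum_distrib_right mult.assoc)
  also have "\<dots> = (\<Sum>n\<in>A. a n * ip01 (f n) h)"
    unfolding ip01_def
    by (subst Bochner_Integration.integral_sum) (auto intro!: L2_mult_integrable assms)
  finally show ?thesis .
qed

section \<open>The backstepping gain\<close>

text \<open>\<open>2 I\<^sub>1(z) / z\<close> as a power series in \<open>z\<^sup>2 / 4\<close> (see \<open>besselI1_eq_reduced\<close>); this removes
  the apparent singularity of the kernel at \<open>y = x\<close>.\<close>

definition besselI1_reduced :: "real \<Rightarrow> real" where
  "besselI1_reduced x = (\<Sum>n. inverse (fact n * fact (Suc n)) * x ^ n)"

lemma summable_besselI1_reduced: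
  "summable (\<lambda>n. inverse (fact n * fact (Suc n)) * (x::real) ^ n)"
proof (rule summable_comparison_test')
  show "summable (\<lambda>n. inverse (fact n) * \<bar>x\<bar> ^ n)" by (rule summable_exp)
  fix n :: nat
  have "fact n \<le> fact n * (fact (Suc n) :: real)"
    using fact_ge_1[of "Suc n"] by simp
  then have "inverse (fact n * fact (Suc n)) \<le> (inverse (fact n) :: real)"
    by (intro le_imp_inverse_le) auto
  then show "norm (inverse (fact n * fact (Suc n)) * x ^ n) \<le> inverse (fact n) * \<bar>x\<bar> ^ n"
    by (simp add: abs_mult power_abs mult_right_mono)
qed

lemma isCont_besselI1_reduced: "isCont besselI1_reduced x"
  unfolding besselI1_reduced_def[abs_def]
  by (rule isCont_powser_converges_everywhere) (rule summable_besselI1_reduced)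

lemma continuous_on_besselI1_reduced [continuous_intros]:
  assumes "continuous_on S f"
  shows "continuous_on S (\<lambda>x. besselI1_reduced (f x))"
  by (rule continuous_on_compose2[of UNIV besselI1_reduced, OF _ assms])
    (auto intro: continuous_at_imp_continuous_on isCont_besselI1_reduced)

lemma besselI1_reduced_pos: "x \<ge> 0 \<Longrightarrow> besselI1_reduced x > 0"
  unfolding besselI1_reduced_def
  by (rule suminf_pos2[OF summable_besselI1_reduced, where i = 0]) auto

lemma besselI1_reduced_0 [simp]: "besselI1_reduced 0 = 1"
  unfolding besselI1_reduced_def by (subst powser_zero) simp

lemma besselI1_eq_reduced: "besselI1 z = z / 2 * besselI1_reduced (z\<^sup>2 / 4)"
proof -
  have "(z / 2) ^ (2 * m + 1) / (fact m * fact (m + 1))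
      = z / 2 * (inverse (fact m * fact (Suc m)) * (z\<^sup>2 / 4) ^ m)" for m
  proof -
    have "(z / 2) ^ (2 * m + 1) = (z / 2) ^ (2 * m) * (z / 2)"
      by (simp only: power_add power_one_right)
    also have "\<dots> = z / 2 * ((z / 2)\<^sup>2) ^ m"
      by (subst power_mult) (rule mult.commute)
    also have "(z / 2)\<^sup>2 = z\<^sup>2 / 4"
      by (simp add: power_divide)
    finally have "(z / 2) ^ (2 * m + 1) = z / 2 * (z\<^sup>2 / 4) ^ m" .
    then show ?thesis
      by (simp only: Suc_eq_plus1 divide_inverse mult_ac)
  qed
  then have "besselI1 z = (\<Sum>m. z / 2 * (inverse (fact m * fact (Suc m)) * (z\<^sup>2 / 4) ^ m))"
    unfolding besselI1_def by (simp only:)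
  also have "\<dots> = z / 2 * besselI1_reduced (z\<^sup>2 / 4)"
    unfolding besselI1_reduced_def by (rule suminf_mult[OF summable_besselI1_reduced])
  finally show ?thesis .
qed

lemma kernelK_1_eq:
  assumes "kappa > 0" "y \<in> {0..1}"
  shows "kernelK kappa 1 y = - (y * kappa / 2) * besselI1_reduced (kappa * (1 - y\<^sup>2) / 4)"
proof (cases "y = 1")
  case False
  with assms have "y\<^sup>2 < 1"
    by (simp add: abs_square_less_1)
  with assms have pos: "kappa * (1 - y\<^sup>2) > 0" by simp
  define z where "z = sqrt (kappa * (1 - y\<^sup>2))"
  have z: "z > 0" "z\<^sup>2 = kappa * (1 - y\<^sup>2)"
    using pos by (auto simp: z_def)
  have "kernelK kappa 1 y = - y * kappa * besselI1 z / z"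
    using False by (simp add: kernelK_def z_def)
  also have "\<dots> = - (y * kappa / 2) * besselI1_reduced (kappa * (1 - y\<^sup>2) / 4)"
    using z by (simp add: besselI1_eq_reduced)
  finally show ?thesis .
qed (simp add: kernelK_def)

lemma continuous_on_kernelK_1:
  assumes "kappa > 0"
  shows "continuous_on {0..1} (kernelK kappa 1)"
proof -
  have "continuous_on {0..1}
      (\<lambda>y. - (y * kappa / 2) * besselI1_reduced (kappa * (1 - y\<^sup>2) / 4))"
    by (intro continuous_intros) auto
  then show ?thesis
    by (rule continuous_on_cong[THEN iffD1, rotated -1]) (auto simp: kernelK_1_eq assms)
qed

lemma kernelK_1_neg:
  assumes "kappa > 0" "0 < y" "y \<le> 1"
  shows "kernelK kappa 1 y < 0"
proof -
  have "y\<^sup>2 \<le> 1" using assms by (simp add: abs_square_le_1)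
  with assms have "besselI1_reduced (kappa * (1 - y\<^sup>2) / 4) > 0"
    by (intro besselI1_reduced_pos) simp
  with assms show ?thesis
    by (simp add: kernelK_1_eq mult_pos_pos)
qed

section \<open>Dirichlet eigenfunctions\<close>

definition dphi :: "nat \<Rightarrow> real \<Rightarrow> real" where
  "dphi n x = sqrt 2 * (real n * pi) * cos (real n * pi * x)"

lemma has_real_derivative_phi: "(phi n has_real_derivative dphi n x) (at x within S)"
  unfolding phi_def[abs_def] dphi_def by (auto intro!: derivative_eq_intros)

lemma has_real_derivative_dphi:
  "(dphi n has_real_derivative - (real n * pi)\<^sup>2 * phi n x) (at x within S)"
  unfolding phi_def dphi_def[abs_def]
  by (auto intro!: derivative_eq_intros simp: power2_eq_square)

lemma deriv_phi: "deriv (phi n) x = dphi n x"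
  by (rule DERIV_imp_deriv) (rule has_real_derivative_phi)

lemma continuous_on_phi [continuous_intros]: "continuous_on S (phi n)"
  unfolding phi_def[abs_def] by (intro continuous_intros)

lemma L2_phi: "L2 (phi n)"
  by (rule L2_continuous_on[OF continuous_on_phi])

lemma phi_0 [simp]: "phi n 0 = 0" and phi_1 [simp]: "phi n 1 = 0"
  by (auto simp: phi_def)

lemma ip01_eq_remainder_add_sum:
  assumes "L2 k" "L2 f"
  shows "ip01 k f = ip01 (\<lambda>y. k y - (\<Sum>n\<in>A. a n * phi n y)) f + (\<Sum>n\<in>A. a n * ip01 (phi n) f)"
proof -
  have "L2 (\<lambda>y. \<Sum>n\<in>A. a n * phi n y)"
    by (intro L2_continuous_on continuous_intros)
  with assms show ?thesis
    by (simp add: ip01_diff_left ip01_sum_left L2_phi)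
qed

lemma L2norm_phi:
  assumes "n \<ge> 1"
  shows "L2norm (phi n) = 1"
proof -
  define a where "a = real n * pi"
  have a: "a > 0" using assms by (simp add: a_def)
  have "(phi n x)\<^sup>2 = 1 - cos (2 * a * x)" for x
    by (simp add: phi_def a_def cos_double_sin power_mult_distrib mult.assoc)
  then have "((\<lambda>x. x - sin (2 * a * x) / (2 * a)) has_vector_derivative (phi n x)\<^sup>2)
      (at x within {0..1})" for x
    using a by (auto intro!: derivative_eq_intros simp: has_real_derivative_iff_has_vector_derivative[symmetric])
  then have "((\<lambda>x. (phi n x)\<^sup>2) has_integral
      (1 - sin (2 * a * 1) / (2 * a)) - (0 - sin (2 * a * 0) / (2 * a))) {0..1}"
    by (intro fundamental_theorem_of_calculus) auto
  moreover have "sin (2 * a) = 0"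
    unfolding a_def by (metis mult.assoc of_nat_numeral of_nat_mult sin_npi)
  ultimately have "integral {0..1} (\<lambda>x. (phi n x)\<^sup>2) = 1"
    using a
    by (simp add: integral_unique)
  moreover have "integral\<^sup>L (lebesgue_on {0..1}) (\<lambda>x. (phi n x)\<^sup>2) = integral {0..1} (\<lambda>x. (phi n x)\<^sup>2)"
    by (rule lebesgue_integral_eq_integral)
      (auto intro!: continuous_imp_integrable_real continuous_intros)
  ultimately show ?thesis by (simp add: L2norm_def)
qed

lemma ip01_kernelK_phi_1_neg:
  assumes "kappa > 0"
  shows "ip01 (kernelK kappa 1) (phi 1) < 0"
proof -
  have "ip01 (kernelK kappa 1) (phi 1) = integral {0..1} (\<lambda>y. kernelK kappa 1 y * phi 1 y)"
    by (intro ip01_continuous_on_eq_integral continuous_on_kernelK_1 continuous_on_phi assms)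
  also have "\<dots> < integral {0..1} (\<lambda>y::real. 0)"
  proof (rule integral_less_real)
    show "continuous_on {0..1} (\<lambda>y. kernelK kappa 1 y * phi 1 y)"
      by (intro continuous_intros continuous_on_kernelK_1 assms)
    fix y :: real
    assume y: "y \<in> {0<..<1}"
    then have "phi 1 y > 0"
      by (simp add: phi_def sin_gt_zero)
    moreover have "kernelK kappa 1 y < 0"
      using y assms by (intro kernelK_1_neg) auto
    ultimately show "kernelK kappa 1 y * phi 1 y < 0"
      by (simp add: mult_neg_pos)
  qed auto
  finally show ?thesis by simp
qed

lemma sum_abs_gain_coeff_deriv_pos:
  assumes "kappa > 0" "N \<ge> 1"
  shows "0 < (\<Sum>n=1..N. \<bar>ip01 (kernelK kappa 1) (phi n) * deriv (phi n) 1\<bar>)"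
proof -
  have "0 < \<bar>ip01 (kernelK kappa 1) (phi 1) * deriv (phi 1) 1\<bar>"
    using ip01_kernelK_phi_1_neg[OF assms(1)] by (simp add: deriv_phi dphi_def)
  also have "\<dots> \<le> (\<Sum>n=1..N. \<bar>ip01 (kernelK kappa 1) (phi n) * deriv (phi n) 1\<bar>)"
    by (rule member_le_sum) (use assms(2) in auto)
  finally show ?thesis .
qed

section \<open>Lambert W\<close>

lemma lambertW:
  assumes "x \<ge> 0"
  shows "lambertW x \<ge> 0" "lambertW x * exp (lambertW x) = x"
proof -
  have mono: "s * exp s < t * exp t" if "0 \<le> s" "s < t" for s t :: real
    using that by (smt (verit) exp_less_mono mult_less_le_imp_less exp_gt_zero mult_left_mono)
  have "\<exists>s. 0 \<le> s \<and> s \<le> x \<and> s * exp s = x"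
    using assms mult_left_mono[of 1 "exp x" x]
    by (intro IVT') (auto intro!: continuous_intros)
  then obtain s where s: "0 \<le> s" "s * exp s = x" by blast
  have "\<exists>!s. 0 \<le> s \<and> s * exp s = x"
  proof (rule ex1I[of _ s])
    fix r
    assume r: "0 \<le> r \<and> r * exp r = x"
    show "r = s"
    proof (rule ccontr)
      assume "r \<noteq> s"
      then consider "r < s" | "s < r" by linarith
      then show False
        using mono[of r s] mono[of s r] r s by cases auto
    qed
  qed (use s in simp)
  then have "0 \<le> lambertW x \<and> lambertW x * exp (lambertW x) = x"
    unfolding lambertW_def by (rule theI')
  then show "lambertW x \<ge> 0" "lambertW x * exp (lambertW x) = x" by auto
qed

lemma lambertW_pos: "x > 0 \<Longrightarrow> lambertW x > 0"
  using lambertW[of x] by (metis less_eq_real_def mult_zero_left)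

lemma scaled_lambertW_less:
  assumes "p > 0" "y \<ge> 0" "2 * y / p < s * exp (p * s / 2)"
  shows "2 / p * lambertW y < s"
proof (rule ccontr)
  define tau where "tau = 2 / p * lambertW y"
  assume "\<not> tau < s"
  moreover have "s > 0"
    using assms by (smt (verit) divide_nonneg_pos exp_gt_zero mult_nonpos_nonneg)
  ultimately have "s * exp (p * s / 2) \<le> tau * exp (p * tau / 2)"
    using assms(1) by (intro mult_mono) auto
  also have "\<dots> = 2 * y / p"
    using assms lambertW(2)[of y] by (simp add: tau_def)
  finally show False using assms(3) by simp
qed

lemma lambertW_dwell_time_bound:
  assumes "p > 0" "b - E > 0" "0 < C'" "C' \<le> C" "A \<ge> 0" "B \<ge> 0" "s > 0"
    and trigger: "b * B + b * A < d"
    and deviation: "d \<le> E * (A + B) + C' * A * (s * exp (p / 2 * s))"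
  shows "2 / p * lambertW (p * (b - E) / (2 * C)) < s"
proof (rule scaled_lambertW_less)
  have "(b - E) * (A + B) < C' * A * (s * exp (p / 2 * s))"
    using trigger deviation by (simp add: algebra_simps)
  moreover have "C' * A * (s * exp (p / 2 * s)) \<le> C * A * (s * exp (p / 2 * s))"
    using assms(4,5,7) by (intro mult_right_mono) auto
  ultimately have less: "(b - E) * A < C * A * (s * exp (p / 2 * s))"
    using assms(2,6) by (smt (verit) distrib_left mult_nonneg_nonneg)
  then have "A > 0"
    using assms(5) by (cases "A = 0") auto
  with less have "b - E < C * (s * exp (p * s / 2))"
    by (simp add: mult.commute mult.left_commute)
  moreover have "C > 0" using assms(3,4) by linarith
  ultimately have "(b - E) / C < s * exp (p * s / 2)"
    by (simp add: pos_divide_less_eq mult.commute)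
  moreover have "2 * (p * (b - E) / (2 * C)) / p = (b - E) / C"
    using assms(1) by simp
  ultimately show "2 * (p * (b - E) / (2 * C)) / p < s * exp (p * s / 2)"
    by simp
qed (use assms in auto)

section \<open>Scalar linear equations\<close>

definition exp_integral :: "real \<Rightarrow> real \<Rightarrow> real" where
  "exp_integral a s = (if a = 0 then s else (exp (a * s) - 1) / a)"

lemma has_real_derivative_exp_integral:
  "(exp_integral a has_real_derivative exp (a * s)) (at s)"
  unfolding exp_integral_def[abs_def]
  by (cases "a = 0") (auto intro!: derivative_eq_intros)

lemma exp_integral_0 [simp]: "exp_integral a 0 = 0"
  by (simp add: exp_integral_def)

lemma exp_minus_mult_exp_integral:
  "exp (- (a * s)) * exp_integral a s = exp_integral (- a) s"
  by (simp add: exp_integral_def field_simps exp_minus)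

lemma abs_exp_minus_one_le:
  fixes x :: real
  shows "\<bar>exp x - 1\<bar> \<le> \<bar>x\<bar> * exp (max x 0)"
proof (cases "x \<ge> 0")
  case True
  have "exp x * (1 - x) \<le> exp x * exp (- x)"
    using exp_ge_add_one_self[of "- x"] by (intro mult_left_mono) auto
  with True show ?thesis
    by (simp add: exp_minus algebra_simps max_def)
next
  case False
  then have "\<bar>exp x - 1\<bar> = 1 - exp x" by simp
  also have "\<dots> \<le> - x" using exp_ge_add_one_self[of x] by linarith
  also have "\<dots> = \<bar>x\<bar> * exp (max x 0)" using False by simp
  finally show ?thesis .
qed

lemma abs_exp_integral_le:
  assumes "s \<ge> 0"
  shows "\<bar>exp_integral a s\<bar> \<le> s * exp (max a 0 * s)"
proof (cases "a = 0")
  case False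
  have "\<bar>exp_integral a s\<bar> = \<bar>exp (a * s) - 1\<bar> / \<bar>a\<bar>"
    using False by (simp add: exp_integral_def)
  also have "\<dots> \<le> \<bar>a * s\<bar> * exp (max (a * s) 0) / \<bar>a\<bar>"
    by (intro divide_right_mono abs_exp_minus_one_le) auto
  also have "max (a * s) 0 = max a 0 * s"
    using assms by (auto simp: max_def zero_le_mult_iff mult_le_0_iff)
  finally show ?thesis
    using False assms by (simp add: abs_mult)
qed (simp add: exp_integral_def assms)

lemma linear_ode_solution:
  fixes c :: "real \<Rightarrow> real"
  assumes "t0 < t" "continuous_on {t0..t} c"
    and "\<And>r. t0 < r \<Longrightarrow> r < t \<Longrightarrow> (c has_real_derivative - L * c r - D) (at r)"
  shows "c t - c t0 = - (L * c t0 + D) * exp_integral (- L) (t - t0)"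
proof -
  define K where "K = L * c t0 + D"
  define m where "m r = exp (L * (r - t0)) * (c r - c t0) + K * exp_integral L (r - t0)" for r
  have "m t = m t0"
  proof (rule DERIV_isconst_end[OF assms(1)])
    have "continuous_on {t0..t} (\<lambda>r. exp_integral L (r - t0))"
      by (rule continuous_on_compose2[of UNIV "exp_integral L"])
        (auto intro!: continuous_intros continuous_at_imp_continuous_on
          DERIV_isCont[OF has_real_derivative_exp_integral])
    then show "continuous_on {t0..t} m"
      unfolding m_def by (intro continuous_intros assms(2))
    fix r
    assume r: "t0 < r" "r < t"
    have "(m has_real_derivative L * exp (L * (r - t0)) * (c r - c t0)
        + exp (L * (r - t0)) * (- L * c r - D) + K * exp (L * (r - t0))) (at r)"
      unfolding m_def
      by (rule derivative_eq_intros refl assms(3)[OF r] DERIV_chain2[OF has_real_derivative_exp_integral]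
        | simp)+
    then show "(m has_real_derivative 0) (at r)"
      by (simp add: K_def algebra_simps)
  qed
  then have eq: "exp (L * (t - t0)) * (c t - c t0) = - K * exp_integral L (t - t0)"
    by (simp add: m_def)
  have "c t - c t0 = (exp (- (L * (t - t0))) * exp (L * (t - t0))) * (c t - c t0)"
    by (simp add: exp_add[symmetric])
  also have "\<dots> = - K * (exp (- (L * (t - t0))) * exp_integral L (t - t0))"
    by (simp only: mult.assoc eq) simp
  also have "\<dots> = - K * exp_integral (- L) (t - t0)"
    by (simp only: exp_minus_mult_exp_integral)
  finally show ?thesis by (simp only: K_def)
qed

lemma linear_ode_increment_bound:
  fixes c :: "real \<Rightarrow> real"
  assumes "t0 < t" "continuous_on {t0..t} c"
    and "\<And>r. t0 < r \<Longrightarrow> r < t \<Longrightarrow> (c has_real_derivative - L * c r - D) (at r)"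
  shows "\<bar>c t - c t0\<bar> \<le> (\<bar>L\<bar> * \<bar>c t0\<bar> + \<bar>D\<bar>) * ((t - t0) * exp (max (- L) 0 * (t - t0)))"
proof -
  have "\<bar>c t - c t0\<bar> = \<bar>L * c t0 + D\<bar> * \<bar>exp_integral (- L) (t - t0)\<bar>"
    by (simp only: linear_ode_solution[OF assms] abs_mult abs_minus_cancel)
  also have "\<dots> \<le> (\<bar>L\<bar> * \<bar>c t0\<bar> + \<bar>D\<bar>) * ((t - t0) * exp (max (- L) 0 * (t - t0)))"
    using assms(1) by (intro mult_mono abs_exp_integral_le) (auto simp: abs_mult intro: abs_triangle_ineq[THEN order_trans])
  finally show ?thesis .
qed

section \<open>Fourier coefficients of heat solutions\<close>

lemma heat_solution_L2:
  assumes "heat_solution theta lam t0 U w" "t0 \<le> t"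
  shows "L2 (w t)"
  using assms unfolding heat_solution_def by auto

lemma continuous_on_heat_solution_coeff:
  assumes hs: "heat_solution theta lam t0 U w" and h: "L2 h"
  shows "continuous_on {t0..t1} (\<lambda>r. ip01 h (w r))"
  unfolding continuous_on_def
proof
  fix s
  assume s: "s \<in> {t0..t1}"
  have lim: "((\<lambda>r. L2norm (\<lambda>x. w r x - w s x)) \<longlongrightarrow> 0) (at s within {t0..})"
    using hs s unfolding heat_solution_def by auto
  have "((\<lambda>r. ip01 h (w r) - ip01 h (w s)) \<longlongrightarrow> 0) (at s within {t0..})"
  proof (rule Lim_null_comparison)
    show "((\<lambda>r. L2norm h * L2norm (\<lambda>x. w r x - w s x)) \<longlongrightarrow> 0) (at s within {t0..})"
      using tendsto_mult_right_zero[OF lim] .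
    have "norm (ip01 h (w r) - ip01 h (w s)) \<le> L2norm h * L2norm (\<lambda>x. w r x - w s x)"
      if "r \<in> {t0..}" for r
      using that s hs
      by (simp add: ip01_diff_right[symmetric] ip01_Cauchy_Schwarz L2_diff heat_solution_L2 h)
    then show "\<forall>\<^sub>F r in at s within {t0..}.
        norm (ip01 h (w r) - ip01 h (w s)) \<le> L2norm h * L2norm (\<lambda>x. w r x - w s x)"
      by (auto simp: eventually_at_filter)
  qed
  then have "((\<lambda>r. ip01 h (w r)) \<longlongrightarrow> ip01 h (w s)) (at s within {t0..})"
    by (simp add: LIM_zero_iff)
  then show "((\<lambda>r. ip01 h (w r)) \<longlongrightarrow> ip01 h (w s)) (at s within {t0..t1})"
    by (rule tendsto_within_subset) auto
qed

lemma has_real_derivative_integral_parametric: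
  fixes f ft :: "real \<Rightarrow> real \<Rightarrow> real"
  assumes ft: "continuous_on ({t0<..} \<times> {0..1}) (\<lambda>(r, x). ft r x)"
    and df: "\<And>r x. r > t0 \<Longrightarrow> x \<in> {0..1} \<Longrightarrow> ((\<lambda>s. f s x) has_real_derivative ft r x) (at r)"
    and f: "\<And>r. r > t0 \<Longrightarrow> continuous_on {0..1} (f r)"
    and h: "continuous_on {0..1} h" and t: "t > t0"
  shows "((\<lambda>r. integral {0..1} (\<lambda>x. h x * f r x)) has_real_derivative
      integral {0..1} (\<lambda>x. h x * ft t x)) (at t)"
proof -
  have "((\<lambda>r. integral (cbox 0 1) (\<lambda>x. h x * f r x)) has_field_derivative
      integral (cbox 0 1) (\<lambda>x. h x * ft t x)) (at t within {t0<..})"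
  proof (rule leibniz_rule_field_derivative[where fx = "\<lambda>r x. h x * ft r x"])
    fix r x
    assume "r \<in> {t0<..}" "x \<in> cbox (0::real) 1"
    then show "((\<lambda>r. h x * f r x) has_field_derivative h x * ft r x) (at r within {t0<..})"
      by (intro has_field_derivative_at_within[OF DERIV_cmult] df) auto
  next
    fix r :: real
    assume "r \<in> {t0<..}"
    then have "continuous_on {0..1} (\<lambda>x. h x * f r x)"
      by (intro continuous_on_mult h f) simp
    then show "(\<lambda>x. h x * f r x) integrable_on cbox 0 1"
      using integrable_continuous_interval by simp
  next
    have "continuous_on ({t0<..} \<times> {0..1}) (\<lambda>p. h (snd p))"
      by (rule continuous_on_compose2[OF h continuous_on_snd[OF continuous_on_id]]) auto
    moreover have "continuous_on ({t0<..} \<times> {0..1}) (\<lambda>p. ft (fst p) (snd p))"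
      using ft by (simp add: case_prod_beta)
    ultimately have "continuous_on ({t0<..} \<times> {0..1}) (\<lambda>p. h (snd p) * ft (fst p) (snd p))"
      by (rule continuous_on_mult)
    then show "continuous_on ({t0<..} \<times> cbox 0 1) (\<lambda>(r, x). h x * ft r x)"
      by (simp add: case_prod_beta)
    show "t \<in> {t0<..}" using t by simp
  qed (rule convex_real_interval)
  moreover have "at t within {t0<..} = at t"
    using t by (intro at_within_open) auto
  ultimately show ?thesis by simp
qed

lemma has_integral_phi_mult_second_deriv:
  assumes v: "\<And>x. x \<in> {0..1} \<Longrightarrow> (v has_real_derivative v' x) (at x within {0..1})"
    and v': "\<And>x. x \<in> {0..1} \<Longrightarrow> (v' has_real_derivative v'' x) (at x within {0..1})"
    and "v 0 = 0" "v 1 = U"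
  shows "((\<lambda>x. phi n x * v'' x) has_integral
      - dphi n 1 * U - (real n * pi)\<^sup>2 * integral {0..1} (\<lambda>x. phi n x * v x)) {0..1}"
proof -
  define F where "F x = phi n x * v' x - dphi n x * v x" for x
  have "((\<lambda>x. phi n x * v'' x + (real n * pi)\<^sup>2 * (phi n x * v x)) has_integral F 1 - F 0) {0..1}"
  proof (rule fundamental_theorem_of_calculus)
    fix x :: real
    assume x: "x \<in> {0..1}"
    have "(F has_real_derivative (dphi n x * v' x + v'' x * phi n x)
        - (- (real n * pi)\<^sup>2 * phi n x * v x + v' x * dphi n x)) (at x within {0..1})"
      unfolding F_def[abs_def]
      by (intro DERIV_diff DERIV_mult has_real_derivative_phi has_real_derivative_dphi v v' x)
    then show "(F has_vector_derivative phi n x * v'' x + (real n * pi)\<^sup>2 * (phi n x * v x))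
        (at x within {0..1})"
      by (simp add: has_real_derivative_iff_has_vector_derivative[symmetric] algebra_simps)
  qed simp
  moreover have "F 1 - F 0 = - dphi n 1 * U"
    using assms by (simp add: F_def)
  ultimately have green: "((\<lambda>x. phi n x * v'' x + (real n * pi)\<^sup>2 * (phi n x * v x))
      has_integral - dphi n 1 * U) {0..1}"
    by simp
  have "continuous_on {0..1} v"
    using v by (rule DERIV_continuous_on)
  then have "((\<lambda>x. phi n x * v x) has_integral integral {0..1} (\<lambda>x. phi n x * v x)) {0..1}"
    by (intro integrable_integral integrable_continuous_interval continuous_on_mult continuous_on_phi)
  from has_integral_diff[OF green has_integral_cmul[OF this, of "(real n * pi)\<^sup>2"]]
  show ?thesis by simp
qed

lemma has_integral_phi_mult_heat_operator:
  assumes v: "\<And>x. x \<in> {0..1} \<Longrightarrow> (v has_real_derivative v' x) (at x within {0..1})"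
    and v': "\<And>x. x \<in> {0..1} \<Longrightarrow> (v' has_real_derivative v'' x) (at x within {0..1})"
    and "v 0 = 0" "v 1 = U"
  shows "((\<lambda>x. phi n x * (theta * v'' x + lam * v x)) has_integral
      - ((real n)\<^sup>2 * pi\<^sup>2 * theta - lam) * integral {0..1} (\<lambda>x. phi n x * v x)
      - theta * dphi n 1 * U) {0..1}"
proof -
  have "continuous_on {0..1} v"
    using v by (rule DERIV_continuous_on)
  then have "((\<lambda>x. phi n x * v x) has_integral integral {0..1} (\<lambda>x. phi n x * v x)) {0..1}"
    by (intro integrable_integral integrable_continuous_interval continuous_on_mult continuous_on_phi)
  from has_integral_add[OF has_integral_cmul[OF has_integral_phi_mult_second_deriv[OF v v' assms(3,4)],
        of theta] has_integral_cmul[OF this, of lam]]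
  show ?thesis
    by (simp add: power_mult_distrib algebra_simps)
qed

lemma heat_solution_coeff_deriv:
  assumes hs: "heat_solution theta lam t0 U w" and t: "t > t0"
  shows "((\<lambda>r. ip01 (phi n) (w r)) has_real_derivative
      - ((real n)\<^sup>2 * pi\<^sup>2 * theta - lam) * ip01 (phi n) (w t) - theta * dphi n 1 * U) (at t)"
proof -
  obtain wt wx wxx :: "real \<Rightarrow> real \<Rightarrow> real" where
    cwt: "continuous_on ({t0<..} \<times> {0..1}) (\<lambda>(t, x). wt t x)" and
    dwt: "\<forall>t>t0. \<forall>x\<in>{0..1}. ((\<lambda>s. w s x) has_real_derivative wt t x) (at t)" and
    dwx: "\<forall>t>t0. \<forall>x\<in>{0..1}. ((\<lambda>y. w t y) has_real_derivative wx t x) (at x within {0..1})" and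
    dwxx: "\<forall>t>t0. \<forall>x\<in>{0..1}. ((\<lambda>y. wx t y) has_real_derivative wxx t x) (at x within {0..1})" and
    pde: "\<forall>t>t0. \<forall>x\<in>{0<..<1}. wt t x = theta * wxx t x + lam * w t x" and
    bc: "\<forall>t>t0. w t 0 = 0 \<and> w t 1 = U"
    using hs unfolding heat_solution_def by blast
  have cw: "continuous_on {0..1} (w r)" if "r > t0" for r
    by (rule DERIV_continuous_on[of _ _ "wx r"]) (use dwx that in auto)
  define I where "I r = integral {0..1} (\<lambda>x. phi n x * w r x)" for r
  have dI: "(I has_real_derivative integral {0..1} (\<lambda>x. phi n x * wt t x)) (at t)"
    unfolding I_def[abs_def]
    by (rule has_real_derivative_integral_parametric[OF cwt])
      (use dwt cw t in \<open>auto intro: continuous_on_phi\<close>)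
  have "integral {0..1} (\<lambda>x. phi n x * wt t x)
      = integral {0..1} (\<lambda>x. phi n x * (theta * wxx t x + lam * w t x))"
  proof (rule integral_spike[of "{0, 1}"])
    fix x :: real
    assume "x \<in> {0..1} - {0, 1}"
    then show "phi n x * (theta * wxx t x + lam * w t x) = phi n x * wt t x"
      using pde t by auto
  qed auto
  also have "\<dots> = - ((real n)\<^sup>2 * pi\<^sup>2 * theta - lam) * I t - theta * dphi n 1 * U"
    unfolding I_def
    by (intro integral_unique has_integral_phi_mult_heat_operator[where v' = "wx t"])
      (use dwx dwxx bc t in auto)
  finally have "(I has_real_derivative
      - ((real n)\<^sup>2 * pi\<^sup>2 * theta - lam) * I t - theta * dphi n 1 * U) (at t)"
    using dI by simp
  moreover have "ip01 (phi n) (w r) = I r" if "r \<in> {t0<..}" for r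
    unfolding I_def using that by (intro ip01_continuous_on_eq_integral continuous_on_phi cw) simp
  ultimately show ?thesis
    using t by (auto intro: has_field_derivative_transform_within_open[of _ _ _ "{t0<..}"])
qed

lemma heat_solution_coeff_increment_bound:
  assumes hs: "heat_solution theta lam t0 (ip01 k (w t0)) w"
    and k: "L2 k" and "theta \<ge> 0" "t0 < t" "n \<ge> 1"
    and q: "q \<ge> 0" "q \<ge> lam - pi\<^sup>2 * theta"
  shows "\<bar>ip01 (phi n) (w t) - ip01 (phi n) (w t0)\<bar>
    \<le> (\<bar>(real n)\<^sup>2 * pi\<^sup>2 * theta - lam\<bar> + theta * \<bar>dphi n 1\<bar> * L2norm k)
        * L2norm (w t0) * ((t - t0) * exp (q * (t - t0)))"
proof -
  define L where "L = (real n)\<^sup>2 * pi\<^sup>2 * theta - lam"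
  define c where "c r = ip01 (phi n) (w r)" for r
  have "\<bar>c t - c t0\<bar> \<le> (\<bar>L\<bar> * \<bar>c t0\<bar> + \<bar>theta * dphi n 1 * ip01 k (w t0)\<bar>)
      * ((t - t0) * exp (max (- L) 0 * (t - t0)))"
    unfolding c_def L_def using \<open>t0 < t\<close>
    by (intro linear_ode_increment_bound continuous_on_heat_solution_coeff[OF hs L2_phi]
      heat_solution_coeff_deriv[OF hs])
  also have "\<dots> \<le> (\<bar>L\<bar> * L2norm (w t0) + theta * \<bar>dphi n 1\<bar> * (L2norm k * L2norm (w t0)))
      * ((t - t0) * exp (q * (t - t0)))"
  proof (intro mult_mono add_mono mult_left_mono)
    have Lw: "L2 (w t0)" using hs by (rule heat_solution_L2) simp
    show "\<bar>c t0\<bar> \<le> L2norm (w t0)"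
      using ip01_Cauchy_Schwarz[OF L2_phi[of n] Lw] \<open>n \<ge> 1\<close> by (simp add: c_def L2norm_phi)
    show "\<bar>theta * dphi n 1 * ip01 k (w t0)\<bar> \<le> theta * \<bar>dphi n 1\<bar> * (L2norm k * L2norm (w t0))"
      using ip01_Cauchy_Schwarz[OF k Lw] \<open>theta \<ge> 0\<close> by (simp add: abs_mult mult_left_mono)
    have "pi\<^sup>2 * theta \<le> (real n)\<^sup>2 * pi\<^sup>2 * theta"
      using mult_right_mono[of 1 "(real n)\<^sup>2" "pi\<^sup>2 * theta"] \<open>n \<ge> 1\<close> \<open>theta \<ge> 0\<close>
      by (simp add: mult.assoc)
    with q(2) have "- L \<le> q" unfolding L_def by linarith
    with q(1) have "max (- L) 0 \<le> q" by simp
    then show "exp (max (- L) 0 * (t - t0)) \<le> exp (q * (t - t0))"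
      using \<open>t0 < t\<close> by (simp add: mult_right_mono)
  qed (use \<open>t0 < t\<close> \<open>theta \<ge> 0\<close> in \<open>auto simp: L2norm_nonneg\<close>)
  finally show ?thesis
    by (simp add: c_def L_def algebra_simps)
qed

lemma heat_solution_sum_coeff_increment_bound:
  assumes hs: "heat_solution theta lam t0 (ip01 k (w t0)) w"
    and k: "L2 k" and "theta \<ge> 0" "t0 < t"
    and q: "q \<ge> 0" "q \<ge> lam - pi\<^sup>2 * theta"
  shows "\<bar>\<Sum>n=1..N. a n * (ip01 (phi n) (w t0) - ip01 (phi n) (w t))\<bar>
    \<le> ((\<Sum>n=1..N. \<bar>a n * ((real n)\<^sup>2 * pi\<^sup>2 * theta - lam)\<bar>)
          + theta * L2norm k * (\<Sum>n=1..N. \<bar>a n * dphi n 1\<bar>))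
        * L2norm (w t0) * ((t - t0) * exp (q * (t - t0)))"
proof -
  define X where "X = L2norm (w t0) * ((t - t0) * exp (q * (t - t0)))"
  have "\<bar>\<Sum>n=1..N. a n * (ip01 (phi n) (w t0) - ip01 (phi n) (w t))\<bar>
      \<le> (\<Sum>n=1..N. \<bar>a n\<bar> * ((\<bar>(real n)\<^sup>2 * pi\<^sup>2 * theta - lam\<bar> + theta * \<bar>dphi n 1\<bar> * L2norm k) * X))"
  proof (rule order_trans[OF sum_abs sum_mono])
    fix n
    assume "n \<in> {1..N}"
    then have "\<bar>ip01 (phi n) (w t) - ip01 (phi n) (w t0)\<bar>
        \<le> (\<bar>(real n)\<^sup>2 * pi\<^sup>2 * theta - lam\<bar> + theta * \<bar>dphi n 1\<bar> * L2norm k)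
          * L2norm (w t0) * ((t - t0) * exp (q * (t - t0)))"
      by (intro heat_solution_coeff_increment_bound[OF hs k \<open>theta \<ge> 0\<close> \<open>t0 < t\<close> _ q]) auto
    then show "\<bar>a n * (ip01 (phi n) (w t0) - ip01 (phi n) (w t))\<bar>
        \<le> \<bar>a n\<bar> * ((\<bar>(real n)\<^sup>2 * pi\<^sup>2 * theta - lam\<bar> + theta * \<bar>dphi n 1\<bar> * L2norm k) * X)"
      by (simp add: X_def abs_mult abs_minus_commute mult_left_mono mult.assoc)
  qed
  also have "\<dots> = ((\<Sum>n=1..N. \<bar>a n * ((real n)\<^sup>2 * pi\<^sup>2 * theta - lam)\<bar>)
      + theta * L2norm k * (\<Sum>n=1..N. \<bar>a n * dphi n 1\<bar>)) * X"
    unfolding abs_mult by (simp add: sum_distrib_left sum_distrib_right sum.distrib algebra_simps)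
  finally show ?thesis
    by (simp add: X_def mult.assoc)
qed

lemma gain_deviation_bound:
  fixes k :: "real \<Rightarrow> real" and N :: nat
  defines "kn \<equiv> \<lambda>n. ip01 k (phi n)"
  assumes hs: "heat_solution theta lam t0 (ip01 k (w t0)) w"
    and k: "L2 k" and "theta \<ge> 0" "t0 < t"
    and q: "q \<ge> 0" "q \<ge> lam - pi\<^sup>2 * theta"
  shows "\<bar>ip01 k (\<lambda>y. w t0 y - w t y)\<bar>
    \<le> L2norm (\<lambda>y. k y - (\<Sum>n=1..N. kn n * phi n y)) * (L2norm (w t0) + L2norm (w t))
      + ((\<Sum>n=1..N. \<bar>kn n * ((real n)\<^sup>2 * pi\<^sup>2 * theta - lam)\<bar>)
          + theta * L2norm k * (\<Sum>n=1..N. \<bar>kn n * dphi n 1\<bar>))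
        * L2norm (w t0) * ((t - t0) * exp (q * (t - t0)))"
proof -
  define r where "r y = k y - (\<Sum>n=1..N. kn n * phi n y)" for y
  define S where "S = (\<Sum>n=1..N. kn n * (ip01 (phi n) (w t0) - ip01 (phi n) (w t)))"
  have Lw0: "L2 (w t0)" and Lwt: "L2 (w t)"
    using hs \<open>t0 < t\<close> by (auto intro: heat_solution_L2)
  have Lr: "L2 r"
    unfolding r_def by (intro L2_diff k L2_continuous_on continuous_intros)
  have "ip01 k (\<lambda>y. w t0 y - w t y) = ip01 r (w t0) - ip01 r (w t) + S"
    unfolding r_def S_def ip01_diff_right[OF k Lw0 Lwt]
      ip01_eq_remainder_add_sum[OF k Lw0, where A = "{1..N}" and a = kn]
      ip01_eq_remainder_add_sum[OF k Lwt, where A = "{1..N}" and a = kn]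
    by (simp add: sum_subtractf right_diff_distrib)
  then have "\<bar>ip01 k (\<lambda>y. w t0 y - w t y)\<bar> \<le> \<bar>ip01 r (w t0)\<bar> + \<bar>ip01 r (w t)\<bar> + \<bar>S\<bar>"
    by (smt (verit) abs_triangle_ineq abs_triangle_ineq4)
  moreover have "\<bar>ip01 r (w t0)\<bar> \<le> L2norm r * L2norm (w t0)"
    using Lr Lw0 by (rule ip01_Cauchy_Schwarz)
  moreover have "\<bar>ip01 r (w t)\<bar> \<le> L2norm r * L2norm (w t)"
    using Lr Lwt by (rule ip01_Cauchy_Schwarz)
  moreover have "\<bar>S\<bar> \<le> ((\<Sum>n=1..N. \<bar>kn n * ((real n)\<^sup>2 * pi\<^sup>2 * theta - lam)\<bar>)
          + theta * L2norm k * (\<Sum>n=1..N. \<bar>kn n * dphi n 1\<bar>))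
        * L2norm (w t0) * ((t - t0) * exp (q * (t - t0)))"
    unfolding S_def by (rule heat_solution_sum_coeff_increment_bound[OF hs k \<open>theta \<ge> 0\<close> \<open>t0 < t\<close> q])
  ultimately show ?thesis
    unfolding r_def[symmetric] by (simp add: distrib_left)
qed

section \<open>Inter-event times\<close>

lemma event_triggered_infinite_step:
  assumes "event_triggered theta lam c beta u0 u ts" "ts j = \<infinity>"
  shows "ts (Suc j) = \<infinity>"
  by (rule assms(1)[unfolded event_triggered_def, THEN conjunct2, THEN conjunct2, THEN conjunct1,
      rule_format, OF assms(2)])

lemma event_triggered_finite_step:
  assumes "event_triggered theta lam c beta u0 u ts" "ts j = ereal tj"
  shows "\<exists>w. heat_solution theta lam tj (ip01 (gain_k theta lam c) (u tj)) w
      \<and> (\<forall>x\<in>{0..1}. w tj x = u tj x)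
      \<and> (let S = {t. tj < t \<and> \<bar>ip01 (gain_k theta lam c) (\<lambda>y. w tj y - w t y)\<bar>
                > beta * L2norm (gain_k theta lam c) * L2norm (w t)
                  + beta * L2norm (gain_k theta lam c) * L2norm (w tj)}
         in (S = {} \<longrightarrow> ts (Suc j) = \<infinity>) \<and> (S \<noteq> {} \<longrightarrow> ts (Suc j) = ereal (Inf S)))"
proof -
  have "ts j \<noteq> \<infinity>" using assms(2) by simp
  from assms(1)[unfolded event_triggered_def, THEN conjunct2, THEN conjunct2, THEN conjunct2,
      rule_format, OF this]
  show ?thesis
    unfolding assms(2) real_of_ereal.simps Let_def
    by (elim exE conjE) (rule exI, intro conjI, assumption+)
qed

lemma event_times_neq_minf:
  assumes "event_triggered theta lam c beta u0 u ts"
  shows "ts j \<noteq> - \<infinity>"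
proof (induction j)
  case 0
  show ?case
    using assms[unfolded event_triggered_def, THEN conjunct2, THEN conjunct1] by simp
next
  case (Suc j)
  show ?case
  proof (cases "ts j")
    case (real tj)
    with event_triggered_finite_step[OF assms this] show ?thesis
      unfolding Let_def by (auto split: if_splits)
  qed (use Suc event_triggered_infinite_step[OF assms] in auto)
qed

lemma event_triggered_interevent_ge:
  fixes theta lam c :: real and k :: "real \<Rightarrow> real"
  defines "k \<equiv> gain_k theta lam c"
  assumes ET: "event_triggered theta lam c beta u0 u ts" and fin: "ts (Suc j) < \<infinity>"
    and dwell: "\<And>t0 w t. heat_solution theta lam t0 (ip01 k (w t0)) w \<Longrightarrow> t0 < t \<Longrightarrow>
      beta * L2norm k * L2norm (w t) + beta * L2norm k * L2norm (w t0)
        < \<bar>ip01 k (\<lambda>y. w t0 y - w t y)\<bar> \<Longrightarrow> t0 + tau \<le> t"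
  shows "ereal tau \<le> ts (Suc j) - ts j"
proof -
  have "ts j \<noteq> \<infinity>"
    using event_triggered_infinite_step[OF ET] fin by auto
  moreover have "ts j \<noteq> - \<infinity>"
    using ET by (rule event_times_neq_minf)
  ultimately obtain tj where tj: "ts j = ereal tj"
    by (cases "ts j") auto
  define S where "S w = {t. tj < t \<and> \<bar>ip01 k (\<lambda>y. w tj y - w t y)\<bar>
    > beta * L2norm k * L2norm (w t) + beta * L2norm k * L2norm (w tj)}" for w
  from event_triggered_finite_step[OF ET tj] obtain w
    where hs: "heat_solution theta lam tj (ip01 k (u tj)) w"
      and agree: "\<forall>x\<in>{0..1}. w tj x = u tj x"
      and next_event: "S w = {} \<longrightarrow> ts (Suc j) = \<infinity>" "S w \<noteq> {} \<longrightarrow> ts (Suc j) = ereal (Inf (S w))"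
    unfolding Let_def S_def k_def by blast
  have "ip01 k (u tj) = ip01 k (w tj)"
    by (rule ip01_cong) (use agree in auto)
  with hs have "heat_solution theta lam tj (ip01 k (w tj)) w" by simp
  then have "tj + tau \<le> Inf (S w)"
    using next_event fin by (intro cInf_greatest) (auto simp: S_def intro: dwell)
  then show ?thesis
    using next_event fin tj by auto
qed

lemma trigger_constant_le:
  fixes G F K theta p :: real
  assumes "theta > 0" "K > 0" "F > 0" "G \<ge> 0" "p > 0"
  shows "0 < G + theta * K * F"
    and "G + theta * K * F
      \<le> (theta * K * F + sqrt 3 / 3 * G * K) + G * (1 + sqrt 3 / 3 * K + K / sqrt p)"
proof -
  show "0 < G + theta * K * F"
    using assms by (simp add: add_nonneg_pos)
  have "G * 1 \<le> G * (1 + sqrt 3 / 3 * K + K / sqrt p)"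
    using assms by (intro mult_left_mono) auto
  moreover have "0 \<le> sqrt 3 / 3 * G * K"
    using assms by simp
  ultimately show "G + theta * K * F
      \<le> (theta * K * F + sqrt 3 / 3 * G * K) + G * (1 + sqrt 3 / 3 * K + K / sqrt p)"
    by simp
qed

theorem mainTheorem4:
  fixes theta lam c beta :: real and N :: nat
  defines "k \<equiv> gain_k theta lam c"
  defines "kn \<equiv> (\<lambda>n. ip01 k (phi n))"
  defines "g \<equiv> (\<lambda>y. \<Sum>n=1..N. kn n * phi n y)"
  defines "lamn \<equiv> (\<lambda>n::nat. (real n)\<^sup>2 * pi\<^sup>2 * theta - lam)"
  defines "FN \<equiv> (\<Sum>n=1..N. \<bar>kn n * deriv (phi n) 1\<bar>)"
  defines "GN \<equiv> (\<Sum>n=1..N. \<bar>kn n * lamn n\<bar>)"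
  defines "p \<equiv> - 2 * theta * pi\<^sup>2 + 2 * lam + lam\<^sup>2 / 3"
  defines "a0 \<equiv> beta * L2norm k - L2norm (\<lambda>y. k y - g y)"
  defines "a1 \<equiv> theta * L2norm k * FN + sqrt 3 / 3 * GN * L2norm k"
  defines "a2 \<equiv> GN * (1 + sqrt 3 / 3 * L2norm k + L2norm k / sqrt p)"
  defines "tau \<equiv> 2 / p * lambertW (p * a0 / (2 * (a1 + a2)))"
  assumes "theta > 0" and "lam \<ge> theta * pi\<^sup>2" and "c \<ge> 0" and "beta > 0" and "N \<ge> 1"
    and "L2norm (\<lambda>y. k y - g y) < beta * L2norm k"
  shows "tau > 0 \<and>
    (\<forall>u0 u ts j. L2 u0 \<and> event_triggered theta lam c beta u0 u ts \<and> ts (Suc j) < \<infinity>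
        \<longrightarrow> ts (Suc j) - ts j \<ge> ereal tau)"
proof -
  have "lam > 0" using assms(12,13) by (smt (verit) pi_gt_zero mult_pos_pos zero_less_power)
  have "p = 2 * (lam - theta * pi\<^sup>2) + lam\<^sup>2 / 3" by (simp add: p_def algebra_simps)
  with \<open>lam > 0\<close> assms(13) have p: "p > 0" and q: "p / 2 \<ge> lam - pi\<^sup>2 * theta"
    by (auto simp: mult.commute intro: add_nonneg_pos)
  have kappa: "(lam + c) / theta > 0" using \<open>lam > 0\<close> assms(12,14) by simp
  have Lk: "L2 k"
    unfolding k_def gain_k_def by (intro L2_continuous_on continuous_on_kernelK_1 kappa)
  have a0: "a0 > 0" unfolding a0_def using assms(17) by linarith
  have "0 < beta * L2norm k"
    using assms(17) L2norm_nonneg[of "\<lambda>y. k y - g y"] by linarith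
  then have "L2norm k > 0"
    using assms(15) by (simp add: zero_less_mult_iff)
  moreover have "FN > 0"
    unfolding FN_def kn_def k_def gain_k_def by (rule sum_abs_gain_coeff_deriv_pos[OF kappa assms(16)])
  moreover have "GN \<ge> 0" unfolding GN_def by (rule sum_nonneg) simp
  ultimately have C: "0 < GN + theta * L2norm k * FN" "GN + theta * L2norm k * FN \<le> a1 + a2"
    unfolding a1_def a2_def using trigger_constant_le assms(12) p by auto
  have "tau > 0"
    unfolding tau_def using p a0 C by (intro mult_pos_pos lambertW_pos) auto
  moreover have "tj + tau \<le> t"
    if hs: "heat_solution theta lam tj (ip01 k (w tj)) w" and "tj < t"
      and trigger: "beta * L2norm k * L2norm (w t) + beta * L2norm k * L2norm (w tj)
        < \<bar>ip01 k (\<lambda>y. w tj y - w t y)\<bar>" for tj w t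
  proof -
    have "\<bar>ip01 k (\<lambda>y. w tj y - w t y)\<bar> \<le> L2norm (\<lambda>y. k y - g y) * (L2norm (w tj) + L2norm (w t))
        + (GN + theta * L2norm k * FN) * L2norm (w tj) * ((t - tj) * exp (p / 2 * (t - tj)))"
      unfolding GN_def FN_def lamn_def kn_def g_def deriv_phi
      by (rule gain_deviation_bound[OF hs Lk]) (use assms(12) p q \<open>tj < t\<close> in auto)
    then have "tau < t - tj"
      unfolding tau_def a0_def using p a0 C \<open>tj < t\<close>
      by (intro lambertW_dwell_time_bound[OF _ _ _ _ _ _ _ trigger]) (auto simp: L2norm_nonneg a0_def)
    then show ?thesis by simp
  qed
  ultimately show ?thesis
    by (auto simp: k_def intro!: event_triggered_interevent_ge)
qed

end
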